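(* Let $n\ge2$. Consider a continuous auction (first-price or all-pay) in which each of $n$ risk-neutral bidders has a private value drawn independently from a continuous CDF $F_C$ with support $[\underline v,\bar v]$, bids may be any nonnegative real number, and there is a symmetric Bayes–Nash equilibrium in which every bidder uses the same strictly increasing bidding function $\beta_C:[\underline v,\bar v]\to\mathbb R_{\ge0}$. Let $\delta>0$ be such that $(\bar v-\underline v)/\delta$ is a positive integer, and define the discrete analogue as follows: values are drawn independently from the distribution $F_D$ on $V=\{\underline v-\delta,\underline v,\underline v+\delta,\dots,\bar v-\delta\}$ given by $F_D(v)=\Pr(\text{value}\le v)=F_C(v+\delta)$ for $v\in V$ (so $F_D(\underline v-\delta)=0$, $F_D(\bar v-\delta)=1$); the permissible bids are $B=\{\beta_C(\underline v),\beta_C(\underline v+\delta),\dots,\beta_C(\bar v)\}$; and a bidder wins only if their bid is strictly higher than all other bids (if the highest bid is tied, nobody wins). Then, in both the discrete first-price auction and the discrete all-pay auction so defined, the profile in which every bidder with value $v$ bids $\beta_C(v)$ (for every value $v$ occurring with positive probability, i.e. $v\in\{\underline v,\dots,\bar v-\delta\}$) is a symmetric pure-strategy Bayes–Nash equilibrium.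
   Context: In the first-price auction a bidder with value $v$ bidding $b$ gets expected payoff $(v-b)\Pr(\text{win})$; in the all-pay auction the expected payoff is $v\Pr(\text{win})-b$. In the continuous auction ties occur with probability zero under the strictly increasing equilibrium $\beta_C$. *)

theory Defs
  imports "HOL-Probability.Probability"
begin

datatype auction_format = FirstPrice | AllPay

fun payoff :: "auction_format \<Rightarrow> real \<Rightarrow> real \<Rightarrow> real \<Rightarrow> real" where
  "payoff FirstPrice v b p = (v - b) * p"
| "payoff AllPay v b p = v * p - b"

text \<open>Continuous auction: values i.i.d. with distribution M (CDF F_C = cdf M), supported
  on [vl, vh]; the n - 1 opponents bid beta of their values.  A bid b wins iff it is
  strictly above every opponent's bid; by independence the winning probability is
  Pr(beta(w) < b)^(n-1).\<close>
definition cont_win_prob ::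
  "real measure \<Rightarrow> nat \<Rightarrow> real \<Rightarrow> real \<Rightarrow> (real \<Rightarrow> real) \<Rightarrow> real \<Rightarrow> real" where
  "cont_win_prob M n vl vh beta b = (measure M {w \<in> {vl..vh}. beta w < b}) ^ (n - 1)"

definition cont_symmetric_BNE ::
  "auction_format \<Rightarrow> real measure \<Rightarrow> nat \<Rightarrow> real \<Rightarrow> real \<Rightarrow> (real \<Rightarrow> real) \<Rightarrow> bool" where
  "cont_symmetric_BNE fmt M n vl vh beta \<longleftrightarrow>
     (\<forall>v \<in> {vl..vh}. \<forall>b \<ge> 0.
        payoff fmt v b (cont_win_prob M n vl vh beta b)
          \<le> payoff fmt v (beta v) (cont_win_prob M n vl vh beta (beta v)))"

text \<open>Discrete analogue.  V = {vl - delta, vl, ..., vh - delta}; the k-th point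
  (k = 0..K, K = (vh - vl)/delta) is vl + (k - 1) delta.\<close>
definition disc_value :: "real \<Rightarrow> real \<Rightarrow> nat \<Rightarrow> real" where
  "disc_value vl delta k = vl + (real k - 1) * delta"

definition disc_cdf :: "real measure \<Rightarrow> real \<Rightarrow> real \<Rightarrow> real" where
  "disc_cdf M delta v = cdf M (v + delta)"

definition disc_pmf :: "real measure \<Rightarrow> real \<Rightarrow> real \<Rightarrow> nat \<Rightarrow> real" where
  "disc_pmf M vl delta k =
     disc_cdf M delta (disc_value vl delta k)
       - (if k = 0 then 0 else disc_cdf M delta (disc_value vl delta (k - 1)))"

definition disc_bids :: "(real \<Rightarrow> real) \<Rightarrow> real \<Rightarrow> real \<Rightarrow> nat \<Rightarrow> real set" where
  "disc_bids beta vl delta K = {beta (vl + real j * delta) | j. j \<le> K}"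

text \<open>Winning probability of bid b in the discrete auction when the opponents follow
  the profile value v_j \<mapsto> beta(v_j), j = 1..K (the value v_0 = vl - delta has
  probability F_C(vl) = 0 and does not contribute).\<close>
definition disc_win_prob ::
  "real measure \<Rightarrow> nat \<Rightarrow> real \<Rightarrow> real \<Rightarrow> nat \<Rightarrow> (real \<Rightarrow> real) \<Rightarrow> real \<Rightarrow> real" where
  "disc_win_prob M n vl delta K beta b =
     (\<Sum>j\<in>{1..K}. if beta (disc_value vl delta j) < b then disc_pmf M vl delta j else 0)
       ^ (n - 1)"

definition disc_symmetric_BNE ::
  "auction_format \<Rightarrow> real measure \<Rightarrow> nat \<Rightarrow> real \<Rightarrow> real \<Rightarrow> nat \<Rightarrow> (real \<Rightarrow> real) \<Rightarrow> bool" where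
  "disc_symmetric_BNE fmt M n vl delta K beta \<longleftrightarrow>
     (\<forall>k \<in> {1..K}. \<forall>b \<in> disc_bids beta vl delta K.
        payoff fmt (disc_value vl delta k) b (disc_win_prob M n vl delta K beta b)
          \<le> payoff fmt (disc_value vl delta k) (beta (disc_value vl delta k))
               (disc_win_prob M n vl delta K beta (beta (disc_value vl delta k))))"

end

theory Submission
  imports Defs
begin

text \<open>On the grid \<open>vl + j\<delta>\<close>, \<open>j \<le> K\<close>, the discrete value distribution puts on
  \<open>{v : \<beta>(v) < \<beta>(vl + j\<delta>)}\<close> exactly the mass \<open>F\<^sub>C(vl + j\<delta>)\<close>, because
  \<open>F\<^sub>D\<close> is \<open>F\<^sub>C\<close> shifted by one grid step and \<open>\<beta>\<close> is strictly increasing.  Hence every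
  permissible bid wins with the same probability \<open>F\<^sub>C(vl + j\<delta>)^(n - 1)\<close> in the
  discrete as in the continuous auction, and the discrete equilibrium inequality
  at value \<open>vl + (k - 1)\<delta>\<close> is an instance of the continuous one.\<close>

lemma (in real_distribution) cdf_lower_support_eq_0:
  assumes "measure M {a..b} = 1" and "measure M {a} = 0"
  shows "cdf M a = 0"
proof -
  have outside: "measure M (- {a..b}) = 0"
    using prob_compl[of "{a..b}"] assms(1) by (simp add: Compl_eq_Diff_UNIV)
  have "cdf M a \<le> measure M (- {a..b} \<union> {a})"
    unfolding cdf_def by (rule finite_measure_mono) auto
  also have "\<dots> \<le> measure M (- {a..b}) + measure M {a}"
    by (rule measure_subadditive) auto
  finally show ?thesis
    using outside assms(2) cdf_nonneg[of a] by simp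
qed

lemma (in real_distribution) measure_atLeastLessThan_eq_cdf_diff:
  assumes "a \<le> b" and "measure M {a} = 0" and "measure M {b} = 0"
  shows "measure M {a..<b} = cdf M b - cdf M a"
proof (cases "a = b")
  case False
  have null: "{x} \<in> null_sets M" if "measure M {x} = 0" for x
    using that by (simp add: null_sets_def emeasure_eq_measure)
  have "{a..<b} = ({a<..b} - {b}) \<union> {a}" using assms(1) False by auto
  also have "measure M \<dots> = measure M ({a<..b} - {b})"
    using null[OF assms(2)] by (rule measure_Un_null_set[rotated]) simp
  also have "\<dots> = measure M {a<..b}"
    using null[OF assms(3)] by (rule measure_Diff_null_set[rotated]) simp
  finally have "measure M {a..<b} = measure M {a<..b}" .
  then show ?thesis using cdf_diff_eq[of a b] assms(1) False by simp
qed simp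

lemma strict_mono_on_sublevel_eq_atLeastLessThan:
  fixes f :: "'a :: linorder \<Rightarrow> 'b :: linorder"
  assumes "strict_mono_on {a..b} f" and "w \<in> {a..b}"
  shows "{x \<in> {a..b}. f x < f w} = {a..<w}"
  using assms strict_mono_on_less[OF assms(1)] by auto

lemma cont_win_prob_at_bid:
  assumes "real_distribution M" and "\<And>x. isCont (cdf M) x"
    and "measure M {vl..vh} = 1"
    and "strict_mono_on {vl..vh} beta" and w: "w \<in> {vl..vh}"
  shows "cont_win_prob M n vl vh beta (beta w) = cdf M w ^ (n - 1)"
proof -
  interpret real_distribution M by fact
  have atomless: "measure M {x} = 0" for x
    using assms(2) isCont_cdf by blast
  have "measure M {vl..<w} = cdf M w"
    using measure_atLeastLessThan_eq_cdf_diff[of vl w] cdf_lower_support_eq_0[OF assms(3)]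
      w atomless by simp
  then show ?thesis
    unfolding cont_win_prob_def strict_mono_on_sublevel_eq_atLeastLessThan[OF assms(4) w] by simp
qed

lemma sum_atLeast1_atMost_telescope:
  fixes f :: "nat \<Rightarrow> 'a :: ab_group_add"
  shows "(\<Sum>i = 1..j. f i - f (i - 1)) = f j - f 0"
  by (induction j) (auto simp: sum.atLeast1_atMost_eq)

lemma disc_win_prob_at_grid_bid:
  assumes cdf_vl: "cdf M vl = 0"
    and mono: "strict_mono_on {vl..vh} beta"
    and delta: "delta > 0" and vh: "vh = vl + real K * delta"
    and j: "j \<le> K"
  shows "disc_win_prob M n vl delta K beta (beta (vl + real j * delta))
          = cdf M (vl + real j * delta) ^ (n - 1)"
proof -
  let ?F = "\<lambda>i. cdf M (vl + real i * delta)"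
  have grid: "vl + real m * delta \<in> {vl..vh}" if "m \<le> K" for m
    using that delta vh by (auto intro!: mult_right_mono)
  have value_shift: "disc_value vl delta i = vl + real (i - 1) * delta" if "i \<ge> 1" for i
    using that by (simp add: disc_value_def of_nat_diff)
  have beats: "beta (disc_value vl delta i) < beta (vl + real j * delta) \<longleftrightarrow> i \<le> j"
    if i: "i \<in> {1..K}" for i
  proof -
    have "beta (vl + real (i - 1) * delta) < beta (vl + real j * delta)
          \<longleftrightarrow> vl + real (i - 1) * delta < vl + real j * delta"
      using i j by (intro strict_mono_on_less[OF mono] grid) auto
    also have "\<dots> \<longleftrightarrow> i \<le> j" using i delta by auto
    finally show ?thesis using i value_shift by simp
  qed
  have pmf: "disc_pmf M vl delta i = ?F i - ?F (i - 1)" if "i \<ge> 1" for i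
    using that by (simp add: disc_pmf_def disc_cdf_def disc_value_def of_nat_diff algebra_simps)
  have "(\<Sum>i\<in>{1..K}. if beta (disc_value vl delta i) < beta (vl + real j * delta)
              then disc_pmf M vl delta i else 0)
        = (\<Sum>i\<in>{1..K}. if i \<in> {..j} then disc_pmf M vl delta i else 0)"
    by (rule sum.cong) (simp_all add: beats)
  also have "\<dots> = (\<Sum>i\<in>{1..K} \<inter> {..j}. disc_pmf M vl delta i)"
    by (rule sum.inter_restrict[symmetric]) simp
  also have "{1..K} \<inter> {..j} = {1..j}" using j by auto
  also have "(\<Sum>i = 1..j. disc_pmf M vl delta i) = (\<Sum>i = 1..j. ?F i - ?F (i - 1))"
    by (rule sum.cong) (simp_all add: pmf)
  also have "\<dots> = ?F j - ?F 0"
    by (rule sum_atLeast1_atMost_telescope)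
  finally show ?thesis
    unfolding disc_win_prob_def using cdf_vl by simp
qed

theorem proposition5:
  fixes fmt :: auction_format and M :: "real measure" and n K :: nat
    and vl vh delta :: real and beta :: "real \<Rightarrow> real"
  assumes n2: "n \<ge> 2"
    and distr: "real_distribution M"
    and cont_cdf: "\<And>x. isCont (cdf M) x"
    and supp_mass: "measure M {vl..vh} = 1"
    and supp_full: "\<And>x e. x \<in> {vl..vh} \<Longrightarrow> e > 0 \<Longrightarrow> measure M {x - e<..<x + e} > 0"
    and beta_mono: "strict_mono_on {vl..vh} beta"
    and beta_nonneg: "\<And>v. v \<in> {vl..vh} \<Longrightarrow> beta v \<ge> 0"
    and cont_eq: "cont_symmetric_BNE fmt M n vl vh beta"
    and delta_pos: "delta > 0"
    and K_pos: "K \<ge> 1"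
    and K_def: "(vh - vl) / delta = real K"
  shows "disc_symmetric_BNE fmt M n vl delta K beta"
proof -
  have vh: "vh = vl + real K * delta" using K_def delta_pos by (simp add: field_simps)
  have grid: "vl + real m * delta \<in> {vl..vh}" if "m \<le> K" for m
    using that delta_pos vh by (auto intro!: mult_right_mono)
  interpret real_distribution M by (rule distr)
  have cdf_vl: "cdf M vl = 0"
    using cdf_lower_support_eq_0[OF supp_mass] isCont_cdf cont_cdf by blast
  have same_win: "disc_win_prob M n vl delta K beta (beta (vl + real j * delta))
      = cont_win_prob M n vl vh beta (beta (vl + real j * delta))" if "j \<le> K" for j
    using disc_win_prob_at_grid_bid[OF cdf_vl beta_mono delta_pos vh that]
      cont_win_prob_at_bid[OF distr cont_cdf supp_mass beta_mono grid[OF that]] by simp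
  show ?thesis
    unfolding disc_symmetric_BNE_def disc_bids_def
  proof (clarify)
    fix k j assume k: "k \<in> {1..K}" and j: "j \<le> K"
    have v: "disc_value vl delta k = vl + real (k - 1) * delta"
      using k by (simp add: disc_value_def of_nat_diff)
    have "k - 1 \<le> K" using k by auto
    with cont_eq grid[OF this] grid[OF j] beta_nonneg[OF grid[OF j]] show
      "payoff fmt (disc_value vl delta k) (beta (vl + real j * delta))
         (disc_win_prob M n vl delta K beta (beta (vl + real j * delta)))
       \<le> payoff fmt (disc_value vl delta k) (beta (disc_value vl delta k))
         (disc_win_prob M n vl delta K beta (beta (disc_value vl delta k)))"
      unfolding v cont_symmetric_BNE_def by (simp add: same_win j)
  qed
qed

end
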